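(* Let $X$ be a separated metric compact Hausdorff space with metric $d$. A binary continuous submetric $\gamma$ on $X$ is reflexive if and only if $d(x,y)\le\gamma((x,i),(y,j))$ for all $x,y\in X$ and $i,j\in\{0,1\}$.
   Context: A metric on a set $X$ is a map $d\colon X\times X\to[0,\infty]$ with $d(x,x)=0$ and $d(x,z)\le d(x,y)+d(y,z)$ (not necessarily symmetric, $\infty$ allowed); separated means $d(x,y)=0=d(y,x)$ implies $x=y$. A separated metric compact Hausdorff space is a compact Hausdorff space with a separated metric continuous $X\times X\to[0,\infty]$ for the upper topology on $[0,\infty]$ (open sets $]u,\infty]$); morphisms are continuous non-expansive maps. $X+X$ is the coproduct with elements $(x,i)$, $i\in\{0,1\}$, coproduct topology and metric $d((x,i),(y,i))=d(x,y)$, $d((x,i),(y,1-i))=\infty$. A binary continuous submetric on $X$ is a (not necessarily separated) metric $\gamma$ on $X+X$, continuous for the upper topology, below the coproduct metric. Its associated corelation is $\binom{q_0}{q_1}\colon X+X\to S:=(X+X)/{\sim_\gamma}$ where $u\sim_\gamma v$ iff $\gamma(u,v)=\gamma(v,u)=0$, $S$ has quotient topology and metric $([u],[v])\mapsto\gamma(u,v)$, $q_i(x)=[(x,i)]$. $\gamma$ is reflexive if there is a continuous non-expansive $e\colon S\to X$ with $e\circ q_0=e\circ q_1=1_X$. *)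

theory Defs
  imports "HOL-Analysis.Analysis"
begin

text \<open>Continuity of a [0,\<infinity>]-valued two-argument map for the upper topology on [0,\<infinity>]
  (open sets ]u,\<infinity>]): every set {(x,y). u < f x y} is open in T \<times> T.\<close>
definition upper_continuous2 :: "'a topology \<Rightarrow> ('a \<Rightarrow> 'a \<Rightarrow> ennreal) \<Rightarrow> bool" where
  "upper_continuous2 T f \<longleftrightarrow>
     (\<forall>u. openin (prod_topology T T) {p \<in> topspace T \<times> topspace T. u < f (fst p) (snd p)})"

definition is_metric_on :: "'a set \<Rightarrow> ('a \<Rightarrow> 'a \<Rightarrow> ennreal) \<Rightarrow> bool" where
  "is_metric_on A d \<longleftrightarrow> (\<forall>x\<in>A. d x x = 0) \<and> (\<forall>x\<in>A. \<forall>y\<in>A. \<forall>z\<in>A. d x z \<le> d x y + d y z)"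

definition separated_on :: "'a set \<Rightarrow> ('a \<Rightarrow> 'a \<Rightarrow> ennreal) \<Rightarrow> bool" where
  "separated_on A d \<longleftrightarrow> (\<forall>x\<in>A. \<forall>y\<in>A. d x y = 0 \<and> d y x = 0 \<longrightarrow> x = y)"

definition sep_metric_CH :: "'a topology \<Rightarrow> ('a \<Rightarrow> 'a \<Rightarrow> ennreal) \<Rightarrow> bool" where
  "sep_metric_CH X d \<longleftrightarrow> compact_space X \<and> Hausdorff_space X \<and>
     is_metric_on (topspace X) d \<and> separated_on (topspace X) d \<and> upper_continuous2 X d"

text \<open>The coproduct X+X: elements (i,x) with i \<in> {0,1}.\<close>
definition coprod2 :: "'a topology \<Rightarrow> (nat \<times> 'a) topology" where
  "coprod2 X = sum_topology (\<lambda>i. X) {0,1}"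

definition coprod_metric :: "('a \<Rightarrow> 'a \<Rightarrow> ennreal) \<Rightarrow> nat \<times> 'a \<Rightarrow> nat \<times> 'a \<Rightarrow> ennreal" where
  "coprod_metric d u v = (if fst u = fst v then d (snd u) (snd v) else \<infinity>)"

definition binary_cont_submetric ::
  "'a topology \<Rightarrow> ('a \<Rightarrow> 'a \<Rightarrow> ennreal) \<Rightarrow> (nat \<times> 'a \<Rightarrow> nat \<times> 'a \<Rightarrow> ennreal) \<Rightarrow> bool" where
  "binary_cont_submetric X d \<gamma> \<longleftrightarrow>
     is_metric_on (topspace (coprod2 X)) \<gamma> \<and> upper_continuous2 (coprod2 X) \<gamma> \<and>
     (\<forall>u\<in>topspace (coprod2 X). \<forall>v\<in>topspace (coprod2 X). \<gamma> u v \<le> coprod_metric d u v)"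

definition sim_rel :: "'b set \<Rightarrow> ('b \<Rightarrow> 'b \<Rightarrow> ennreal) \<Rightarrow> ('b \<times> 'b) set" where
  "sim_rel A \<gamma> = {(u,v). u \<in> A \<and> v \<in> A \<and> \<gamma> u v = 0 \<and> \<gamma> v u = 0}"

definition quotient_top :: "'b topology \<Rightarrow> ('b \<times> 'b) set \<Rightarrow> 'b set topology" where
  "quotient_top T R = topology (\<lambda>U. U \<subseteq> topspace T // R \<and> openin T (\<Union>U))"

lemma istopology_quotient_top:
  assumes "equiv (topspace T) R"
  shows "istopology (\<lambda>U. U \<subseteq> topspace T // R \<and> openin T (\<Union>U))"
proof -
  have "\<Union>(U \<inter> V) = \<Union>U \<inter> \<Union>V" if "U \<subseteq> topspace T // R" "V \<subseteq> topspace T // R" for U V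
  proof
    show "\<Union>U \<inter> \<Union>V \<subseteq> \<Union>(U \<inter> V)"
    proof
      fix x assume "x \<in> \<Union>U \<inter> \<Union>V"
      then obtain A B where AB: "A \<in> U" "B \<in> V" "x \<in> A" "x \<in> B" by blast
      have "A = B" using quotient_disj[OF assms] AB that by blast
      then show "x \<in> \<Union>(U \<inter> V)" using AB by blast
    qed
  qed blast
  moreover have "openin T (\<Union>(\<Union>K))" if "\<forall>U\<in>K. openin T (\<Union>U)" for K :: "'a set set set"
  proof -
    have "\<Union>(\<Union>K) = \<Union>(Union ` K)" by blast
    then show ?thesis using that by auto
  qed
  ultimately show ?thesis
    unfolding istopology_def by (auto intro!: openin_Int)
qed

lemma openin_quotient_top:
  assumes "equiv (topspace T) R"
  shows "openin (quotient_top T R) U \<longleftrightarrow> U \<subseteq> topspace T // R \<and> openin T (\<Union>U)"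
  unfolding quotient_top_def using topology_inverse'[OF istopology_quotient_top[OF assms]] by simp

definition corel_space :: "'a topology \<Rightarrow> (nat \<times> 'a \<Rightarrow> nat \<times> 'a \<Rightarrow> ennreal) \<Rightarrow> (nat \<times> 'a) set topology" where
  "corel_space X \<gamma> = quotient_top (coprod2 X) (sim_rel (topspace (coprod2 X)) \<gamma>)"

definition corel_class :: "'a topology \<Rightarrow> (nat \<times> 'a \<Rightarrow> nat \<times> 'a \<Rightarrow> ennreal) \<Rightarrow> nat \<times> 'a \<Rightarrow> (nat \<times> 'a) set" where
  "corel_class X \<gamma> u = sim_rel (topspace (coprod2 X)) \<gamma> `` {u}"

definition corel_q :: "'a topology \<Rightarrow> (nat \<times> 'a \<Rightarrow> nat \<times> 'a \<Rightarrow> ennreal) \<Rightarrow> nat \<Rightarrow> 'a \<Rightarrow> (nat \<times> 'a) set" where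
  "corel_q X \<gamma> i x = corel_class X \<gamma> (i, x)"

text \<open>\<gamma> is reflexive: there is a continuous non-expansive e : S \<rightarrow> X (S carrying the metric
  ([u],[v]) \<mapsto> \<gamma>(u,v)) with e \<circ> q_0 = e \<circ> q_1 = 1_X.\<close>
definition reflexive_submetric ::
  "'a topology \<Rightarrow> ('a \<Rightarrow> 'a \<Rightarrow> ennreal) \<Rightarrow> (nat \<times> 'a \<Rightarrow> nat \<times> 'a \<Rightarrow> ennreal) \<Rightarrow> bool" where
  "reflexive_submetric X d \<gamma> \<longleftrightarrow>
     (\<exists>e. continuous_map (corel_space X \<gamma>) X e \<and>
          (\<forall>u\<in>topspace (coprod2 X). \<forall>v\<in>topspace (coprod2 X).
              d (e (corel_class X \<gamma> u)) (e (corel_class X \<gamma> v)) \<le> \<gamma> u v) \<and>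
          (\<forall>x\<in>topspace X. e (corel_q X \<gamma> 0 x) = x \<and> e (corel_q X \<gamma> 1 x) = x))"

end

theory Submission
  imports Defs
begin

text \<open>If d(x,y) \<le> \<gamma>((x,i),(y,j)) always holds, then \<gamma>-equivalent points of X+X have the same
  X-component by separatedness, so the projection X+X \<rightarrow> X descends to the quotient S; it is
  continuous because S carries the quotient topology and non-expansive by the inequality itself.
  Conversely, a retraction e yields d(x,y) = d(e(q_i x), e(q_j y)) \<le> \<gamma>((x,i),(y,j)).\<close>

lemma topspace_coprod2: "topspace (coprod2 X) = {0,1} \<times> topspace X"
  by (auto simp: coprod2_def)

lemma continuous_map_snd_sum_topology: "continuous_map (sum_topology (\<lambda>i. X) I) X snd"
proof -
  have "{u \<in> I \<times> topspace X. snd u \<in> U} = I \<times> U" if "openin X U" for U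
    using openin_subset[OF that] by auto
  then show ?thesis
    by (auto simp: continuous_map_def openin_sum_topology openin_subset)
qed

lemma equiv_sim_rel:
  assumes "is_metric_on A \<gamma>"
  shows "equiv A (sim_rel A \<gamma>)"
proof (rule equivI)
  show "refl_on A (sim_rel A \<gamma>)"
    using assms by (auto simp: sim_rel_def is_metric_on_def refl_on_def)
  show "sim_rel A \<gamma> \<subseteq> A \<times> A"
    by (auto simp: sim_rel_def)
  show "sym (sim_rel A \<gamma>)"
    by (auto simp: sim_rel_def sym_def)
  show "trans (sim_rel A \<gamma>)"
  proof (rule transI)
    fix u v w assume uv: "(u, v) \<in> sim_rel A \<gamma>" and vw: "(v, w) \<in> sim_rel A \<gamma>"
    then have "u \<in> A" "v \<in> A" "w \<in> A"
      by (auto simp: sim_rel_def)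
    then have "\<gamma> u w \<le> \<gamma> u v + \<gamma> v w" "\<gamma> w u \<le> \<gamma> w v + \<gamma> v u"
      using assms unfolding is_metric_on_def by blast+
    with uv vw show "(u, w) \<in> sim_rel A \<gamma>"
      by (simp add: sim_rel_def)
  qed
qed

lemma quotient_map_quotient_top:
  assumes R: "equiv (topspace T) R"
  shows "quotient_map T (quotient_top T R) (\<lambda>u. R `` {u})"
proof -
  have top: "topspace (quotient_top T R) = topspace T // R"
  proof (rule subset_antisym)
    show "topspace (quotient_top T R) \<subseteq> topspace T // R"
      using openin_quotient_top[OF R] openin_topspace by blast
    have "openin (quotient_top T R) (topspace T // R)"
      by (simp add: openin_quotient_top[OF R] Union_quotient[OF R])
    then show "topspace T // R \<subseteq> topspace (quotient_top T R)"
      by (rule openin_subset)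
  qed
  have "{u \<in> topspace T. R `` {u} \<in> U} = \<Union>U" if U: "U \<subseteq> topspace T // R" for U
  proof
    show "{u \<in> topspace T. R `` {u} \<in> U} \<subseteq> \<Union>U"
      using equiv_class_self[OF R] by blast
    show "\<Union>U \<subseteq> {u \<in> topspace T. R `` {u} \<in> U}"
    proof clarify
      fix u C assume "u \<in> C" "C \<in> U"
      then obtain v where "v \<in> topspace T" "C = R `` {v}"
        using U by (auto elim!: quotientE)
      with \<open>u \<in> C\<close> have vu: "(v, u) \<in> R"
        by simp
      then have "u \<in> topspace T"
        using equiv_type[OF R] by blast
      moreover have "R `` {u} = C"
        using equiv_class_eq[OF R vu] \<open>C = R `` {v}\<close> by simp
      ultimately show "u \<in> topspace T \<and> R `` {u} \<in> U"
        using \<open>C \<in> U\<close> by simp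
    qed
  qed
  moreover have "(\<lambda>u. R `` {u}) ` topspace T = topspace T // R"
    by (auto simp: quotient_def)
  ultimately show ?thesis
    unfolding quotient_map_def top openin_quotient_top[OF R] by auto
qed

lemma respects_some_equiv_class:
  assumes "equiv A R" "f respects R" "u \<in> A"
  shows "f (SOME v. v \<in> R `` {u}) = f u"
proof -
  have "(SOME v. v \<in> R `` {u}) \<in> R `` {u}"
    using equiv_class_self[OF assms(1,3)] by (rule someI)
  then show ?thesis
    using assms(2) by (auto simp: congruent_def)
qed

lemma continuous_map_quotient_top_lift:
  assumes R: "equiv (topspace T) R" and "f respects R" and "continuous_map T Y f"
  shows "continuous_map (quotient_top T R) Y (\<lambda>C. f (SOME u. u \<in> C))"
proof (rule continuous_compose_quotient_map[OF quotient_map_quotient_top[OF R]])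
  show "continuous_map T Y ((\<lambda>C. f (SOME u. u \<in> C)) \<circ> (\<lambda>u. R `` {u}))"
    using assms(3) by (rule continuous_map_eq)
      (simp add: respects_some_equiv_class[OF R assms(2)] del: Image_singleton_iff)
qed

lemma snd_respects_sim_rel:
  assumes "separated_on B d" "snd ` A \<subseteq> B"
    and "\<forall>u\<in>A. \<forall>v\<in>A. d (snd u) (snd v) \<le> \<gamma> u v"
  shows "snd respects (sim_rel A \<gamma>)"
proof (rule congruentI)
  fix u v assume "(u, v) \<in> sim_rel A \<gamma>"
  then have "u \<in> A" "v \<in> A" "\<gamma> u v = 0" "\<gamma> v u = 0"
    by (auto simp: sim_rel_def)
  then have "d (snd u) (snd v) = 0" "d (snd v) (snd u) = 0"
    using assms(3) by (metis le_zero_eq)+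
  moreover have "snd u \<in> B" "snd v \<in> B"
    using assms(2) \<open>u \<in> A\<close> \<open>v \<in> A\<close> by auto
  ultimately show "snd u = snd v"
    using assms(1) by (simp add: separated_on_def)
qed

lemma reflexive_submetric_le:
  assumes "reflexive_submetric X d \<gamma>"
    and "x \<in> topspace X" "y \<in> topspace X" "i \<in> {0,1}" "j \<in> {0,1}"
  shows "d x y \<le> \<gamma> (i, x) (j, y)"
proof -
  obtain e where
    e_le: "\<forall>u\<in>topspace (coprod2 X). \<forall>v\<in>topspace (coprod2 X).
              d (e (corel_class X \<gamma> u)) (e (corel_class X \<gamma> v)) \<le> \<gamma> u v" and
    e_q: "\<forall>x\<in>topspace X. e (corel_q X \<gamma> 0 x) = x \<and> e (corel_q X \<gamma> 1 x) = x"
    using assms(1) unfolding reflexive_submetric_def by blast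
  have "e (corel_class X \<gamma> (k, z)) = z" if "k \<in> {0,1}" "z \<in> topspace X" for k z
    using e_q that by (auto simp: corel_q_def)
  then show ?thesis
    using e_le assms(2-5) by (force simp: topspace_coprod2)
qed

lemma reflexive_submetricI:
  assumes sep: "separated_on (topspace X) d"
    and met: "is_metric_on (topspace (coprod2 X)) \<gamma>"
    and le: "\<forall>x\<in>topspace X. \<forall>y\<in>topspace X. \<forall>i\<in>{0,1}. \<forall>j\<in>{0,1}. d x y \<le> \<gamma> (i, x) (j, y)"
  shows "reflexive_submetric X d \<gamma>"
proof -
  define R where "R = sim_rel (topspace (coprod2 X)) \<gamma>"
  define e where "e C = snd (SOME u. u \<in> C)" for C :: "(nat \<times> 'a) set"
  have R: "equiv (topspace (coprod2 X)) R"
    unfolding R_def using met by (rule equiv_sim_rel)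
  have snd_le: "\<forall>u\<in>topspace (coprod2 X). \<forall>v\<in>topspace (coprod2 X). d (snd u) (snd v) \<le> \<gamma> u v"
  proof (intro ballI)
    fix u v assume "u \<in> topspace (coprod2 X)" "v \<in> topspace (coprod2 X)"
    then show "d (snd u) (snd v) \<le> \<gamma> u v"
      using le[rule_format, of "snd u" "snd v" "fst u" "fst v"]
      by (simp add: topspace_coprod2 mem_Times_iff)
  qed
  have "snd ` topspace (coprod2 X) \<subseteq> topspace X"
    by (auto simp: topspace_coprod2)
  with sep have "snd respects R"
    unfolding R_def using snd_le by (rule snd_respects_sim_rel)
  then have e_class: "e (corel_class X \<gamma> u) = snd u" if "u \<in> topspace (coprod2 X)" for u
    using respects_some_equiv_class[OF R _ that]
    by (simp add: e_def corel_class_def R_def)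
  have e_cont: "continuous_map (corel_space X \<gamma>) X e"
    unfolding corel_space_def e_def R_def[symmetric]
    using R \<open>snd respects R\<close> continuous_map_snd_sum_topology[of X "{0,1}"]
    unfolding coprod2_def by (rule continuous_map_quotient_top_lift)
  have e_q: "\<forall>x\<in>topspace X. e (corel_q X \<gamma> 0 x) = x \<and> e (corel_q X \<gamma> 1 x) = x"
    by (simp add: corel_q_def e_class topspace_coprod2)
  have e_le: "\<forall>u\<in>topspace (coprod2 X). \<forall>v\<in>topspace (coprod2 X).
      d (e (corel_class X \<gamma> u)) (e (corel_class X \<gamma> v)) \<le> \<gamma> u v"
    using snd_le e_class by simp
  show ?thesis
    unfolding reflexive_submetric_def by (intro exI[of _ e] conjI e_cont e_q e_le)
qed

theorem lemma5p4:
  fixes X :: "'a topology" and d :: "'a \<Rightarrow> 'a \<Rightarrow> ennreal"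
    and \<gamma> :: "nat \<times> 'a \<Rightarrow> nat \<times> 'a \<Rightarrow> ennreal"
  assumes "sep_metric_CH X d"
    and "binary_cont_submetric X d \<gamma>"
  shows "reflexive_submetric X d \<gamma> \<longleftrightarrow>
    (\<forall>x\<in>topspace X. \<forall>y\<in>topspace X. \<forall>i\<in>{0,1}. \<forall>j\<in>{0,1}. d x y \<le> \<gamma> (i, x) (j, y))"
proof
  show "reflexive_submetric X d \<gamma> \<Longrightarrow>
      \<forall>x\<in>topspace X. \<forall>y\<in>topspace X. \<forall>i\<in>{0,1}. \<forall>j\<in>{0,1}. d x y \<le> \<gamma> (i, x) (j, y)"
    by (intro ballI) (rule reflexive_submetric_le)
  have "separated_on (topspace X) d"
    using assms(1) by (simp add: sep_metric_CH_def)
  moreover have "is_metric_on (topspace (coprod2 X)) \<gamma>"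
    using assms(2) by (simp add: binary_cont_submetric_def)
  ultimately show "\<forall>x\<in>topspace X. \<forall>y\<in>topspace X. \<forall>i\<in>{0,1}. \<forall>j\<in>{0,1}. d x y \<le> \<gamma> (i, x) (j, y)
      \<Longrightarrow> reflexive_submetric X d \<gamma>"
    by (rule reflexive_submetricI)
qed

end
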